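(* Let $p>2$ be a prime, $n\ge1$, $A$ a finite abelian $p$-group (written additively) and $G$ a group containing $A$ as a normal subgroup with $G/A\cong\mathbb{Z}_{p^n}$, generated by the image of an element $t\in G$. Let $\psi:A\to A$ be $\psi(a)=t^{-1}at$. Suppose $[e]_\varphi$ is a subgroup of $G$ for every $\varphi\in{\rm Aut}\,G$. Then for every $a\in\Omega_1(A)$ one has $(\mathrm{id}+\psi+\psi^2+\dots+\psi^{p^n-1})(a)=0$; equivalently, the assignment $d(\bar t)=a$ extends to a derivation $d:G/A\to A$.
   Context: For an automorphism $\varphi$ of $G$, $[e]_\varphi=\{z^{-1}\varphi(z)\mid z\in G\}$. $\Omega_k(A)=\{a\in A\mid p^k a=0\}$. $G/A$ acts on the abelian normal subgroup $A$ by conjugation, $a^{\bar g}=g^{-1}ag$. A derivation $d:G/A\to A$ is a map with $d(h_1h_2)=d(h_1)+d(h_2)^{h_1}$ for all $h_1,h_2$; for a cyclic group $\langle \bar t\rangle$ of order $p^n$, a value $d(\bar t)=a$ extends to a derivation iff $(\mathrm{id}+\psi+\dots+\psi^{p^n-1})a=0$, in which case $d(\bar t^k)=(\mathrm{id}+\psi+\dots+\psi^{k-1})a$. *)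

theory Defs
  imports "HOL-Algebra.Algebra"
begin

definition twisted_class_e :: "('a, 'b) monoid_scheme \<Rightarrow> ('a \<Rightarrow> 'a) \<Rightarrow> 'a set" where
  "twisted_class_e G phi = {inv\<^bsub>G\<^esub> z \<otimes>\<^bsub>G\<^esub> phi z | z. z \<in> carrier G}"

definition conj_by :: "('a, 'b) monoid_scheme \<Rightarrow> 'a \<Rightarrow> 'a \<Rightarrow> 'a" where
  "conj_by G t a = inv\<^bsub>G\<^esub> t \<otimes>\<^bsub>G\<^esub> a \<otimes>\<^bsub>G\<^esub> t"

end

theory Submission
  imports Defs
begin

(* Put x_j = t^-j a t^j, so that psi^j a = x_j. For the inner automorphism phi z = a z a^-1 and
   z = b t^k with b in A one computes z^-1 phi(z) = x_k a^-1. Hence c = x_1 a^-1 lies in [e]_phi,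
   and since [e]_phi is a subgroup so does c^2 = x_k a^-1 for some k; conjugating gives the
   recurrence x_(i+k) x_i = x_(i+1)^2 for all integers i.

   The x_j have order dividing p and are periodic with period p^n, because t^(p^n) lies in the
   abelian group A. For a weight w : Z -> Z that is periodic modulo p put
   W(w) = prod_(i < p^n) x_i^w(i); shifting the index and using the recurrence gives
   W(w(. - k)) W(w) = W(2 w(. - 1)). The weights w(j) = j and w(j) = j(j - 1) yield P^(2-k) = 1
   and W((4 - 2k) j + k^2 + k - 4) = 1 for P = prod_(i < p^n) x_i. If p does not divide 2 - k the
   first gives P = 1; otherwise k = 2 mod p, the second becomes P^2 = 1, and P = 1 since p is odd. *)

lemma (in comm_group) finprod_shift_one_periodic:
  assumes closed: "\<And>j. f j \<in> carrier G" and periodic: "\<And>j. f (j + int m) = f j"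
  shows "(\<Otimes>i\<in>{..<m}. f (int i + 1)) = (\<Otimes>i\<in>{..<m}. f (int i))"
proof (cases m)
  case (Suc n)
  have "(\<Otimes>i\<in>{..m}. f (int i)) = (\<Otimes>i\<in>{..<m}. f (int i + 1)) \<otimes> f 0"
    using finprod_Suc2[of "\<lambda>i. f (int i)" n] closed Suc
    by (simp add: lessThan_Suc_atMost add.commute)
  moreover have "(\<Otimes>i\<in>{..m}. f (int i)) = (\<Otimes>i\<in>{..<m}. f (int i)) \<otimes> f 0"
    using finprod_Suc[of "\<lambda>i. f (int i)" n] periodic[of 0] closed Suc
    by (simp add: lessThan_Suc_atMost m_comm)
  ultimately have "(\<Otimes>i\<in>{..<m}. f (int i + 1)) \<otimes> f 0 = (\<Otimes>i\<in>{..<m}. f (int i)) \<otimes> f 0"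
    by (rule trans[OF sym])
  then show ?thesis
    using closed by (simp add: Pi_def)
qed simp

lemma (in comm_group) finprod_shift_periodic:
  assumes closed: "\<And>j. f j \<in> carrier G" and periodic: "\<And>j. f (j + int m) = f j"
  shows "(\<Otimes>i\<in>{..<m}. f (int i + s)) = (\<Otimes>i\<in>{..<m}. f (int i))"
proof (induction s rule: int_induct[where k = 0])
  case (step1 s)
  have "(\<Otimes>i\<in>{..<m}. f (int i + 1 + s)) = (\<Otimes>i\<in>{..<m}. f (int i + s))"
    by (rule finprod_shift_one_periodic) (simp add: closed, metis add.assoc add.commute periodic)
  then show ?case using step1 by (simp add: ac_simps)
next
  case (step2 s)
  have "(\<Otimes>i\<in>{..<m}. f (int i + 1 + (s - 1))) = (\<Otimes>i\<in>{..<m}. f (int i + (s - 1)))"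
    by (rule finprod_shift_one_periodic) (simp add: closed, metis add.assoc add.commute periodic)
  then show ?case using step2 by (simp add: ac_simps)
qed simp

locale periodic_exponent_seq = comm_group +
  fixes x :: "int \<Rightarrow> 'a" and p m :: nat
  assumes seq_closed [simp]: "x j \<in> carrier G"
    and seq_pow_exponent: "x j [^] p = \<one>"
    and seq_periodic: "x (j + int m) = x j"
    and exponent_dvd_period: "p dvd m"
begin

definition weighted_prod :: "(int \<Rightarrow> int) \<Rightarrow> 'a" where
  "weighted_prod w = (\<Otimes>i\<in>{..<m}. x (int i) [^] w (int i))"

lemma weighted_prod_closed [simp]: "weighted_prod w \<in> carrier G"
  by (simp add: weighted_prod_def Pi_def)

lemma seq_int_pow_cong:
  assumes "int p dvd a - b"
  shows "x j [^] a = x j [^] b"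
proof -
  have "ord (x j) dvd p" using pow_eq_id seq_pow_exponent by simp
  then have "int (ord (x j)) dvd b - a"
    by (metis dvd_diff_commute dvd_trans int_dvd_int_iff assms)
  then show ?thesis by (simp add: int_pow_eq)
qed

lemma weighted_prod_cong: "(\<And>j. int p dvd v j - w j) \<Longrightarrow> weighted_prod v = weighted_prod w"
  unfolding weighted_prod_def by (rule finprod_cong') (simp_all add: seq_int_pow_cong Pi_def)

lemma weighted_prod_add: "weighted_prod (\<lambda>j. v j + w j) = weighted_prod v \<otimes> weighted_prod w"
  by (simp add: weighted_prod_def int_pow_mult Pi_def)

lemma weighted_prod_diff_eq_one:
  "weighted_prod v = weighted_prod w \<Longrightarrow> weighted_prod (\<lambda>j. v j - w j) = \<one>"
proof -
  assume eq: "weighted_prod v = weighted_prod w"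
  have "weighted_prod (\<lambda>j. v j - w j) \<otimes> weighted_prod w = \<one> \<otimes> weighted_prod w"
    using weighted_prod_add[of "\<lambda>j. v j - w j" w] eq by simp
  then show ?thesis by (rule r_cancel) simp_all
qed

lemma weighted_prod_const: "weighted_prod (\<lambda>_. int c) = weighted_prod (\<lambda>_. 1) [^] c"
proof (induction c)
  case (Suc c)
  then show ?case
    using weighted_prod_add[of "\<lambda>_. int c" "\<lambda>_. 1"] by (simp add: add.commute m_comm)
qed (simp add: weighted_prod_def)

lemma weighted_prod_shift:
  assumes periodic: "\<And>j. int p dvd w (j + int m) - w j"
  shows "weighted_prod (\<lambda>j. w (j - s)) = (\<Otimes>i\<in>{..<m}. x (int i + s) [^] w (int i))"
proof -
  have "x (j + int m) [^] w (j + int m - s) = x j [^] w (j - s)" for j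
    using seq_int_pow_cong periodic[of "j - s"] by (simp add: seq_periodic algebra_simps)
  then show ?thesis
    using finprod_shift_periodic[of "\<lambda>j. x j [^] w (j - s)" m s] by (simp add: weighted_prod_def)
qed

lemma weighted_prod_recurrence:
  assumes recurrence: "\<And>i. x (i + k) \<otimes> x i = x (i + 1) \<otimes> x (i + 1)"
    and periodic: "\<And>j. int p dvd w (j + int m) - w j"
  shows "weighted_prod (\<lambda>j. w (j - k) + w j) = weighted_prod (\<lambda>j. 2 * w (j - 1))"
proof -
  have periodic2: "int p dvd 2 * w (j + int m) - 2 * w j" for j
    using periodic[of j] by (metis dvd_mult right_diff_distrib)
  have square: "(u \<otimes> u) [^] e = u [^] (2 * e)" if "u \<in> carrier G" for u and e :: int
    using that by (simp only: mult_2 int_pow_mult int_pow_distrib)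
  have "weighted_prod (\<lambda>j. w (j - k) + w j) = weighted_prod (\<lambda>j. w (j - k)) \<otimes> weighted_prod w"
    by (rule weighted_prod_add)
  also have "\<dots> = (\<Otimes>i\<in>{..<m}. x (int i + k) [^] w (int i)) \<otimes> weighted_prod w"
    by (simp only: weighted_prod_shift[of w, OF periodic])
  also have "\<dots> = (\<Otimes>i\<in>{..<m}. (x (int i + k) \<otimes> x (int i)) [^] w (int i))"
    by (simp add: weighted_prod_def int_pow_distrib Pi_def)
  also have "\<dots> = (\<Otimes>i\<in>{..<m}. x (int i + 1) [^] (2 * w (int i)))"
    by (simp only: recurrence square seq_closed)
  also have "\<dots> = weighted_prod (\<lambda>j. 2 * w (j - 1))"
    by (simp only: weighted_prod_shift[of "\<lambda>j. 2 * w j", OF periodic2])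
  finally show ?thesis .
qed

lemma weighted_prod_one_of_const:
  assumes "Factorial_Ring.prime p" and "weighted_prod (\<lambda>_. e) = \<one>" and "\<not> int p dvd e"
  shows "weighted_prod (\<lambda>_. 1) = \<one>"
proof -
  let ?P = "weighted_prod (\<lambda>_. 1)" and ?r = "nat (e mod int p)"
  have r: "int ?r = e mod int p"
    using assms(1) by (simp add: prime_gt_0_nat)
  have "?P [^] ?r = weighted_prod (\<lambda>_. e)"
    unfolding weighted_prod_const[symmetric] r by (rule weighted_prod_cong) (metis mod_mod_trivial mod_eq_dvd_iff)
  then have "?P [^] ?r = \<one>" using assms(2) by simp
  moreover have "?P [^] p = \<one>"
    using weighted_prod_cong[of "\<lambda>_. int p" "\<lambda>_. 0"] weighted_prod_const[of p]
    by (simp add: weighted_prod_def)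
  ultimately have ord_dvd: "ord ?P dvd gcd ?r p"
    by (simp add: pow_eq_id)
  moreover have "\<not> p dvd ?r"
  proof
    assume "p dvd ?r"
    then have "int p dvd e mod int p" by (metis r int_dvd_int_iff)
    then show False using assms(3) by (simp add: dvd_mod_iff)
  qed
  then have "coprime ?r p"
    using assms(1) by (simp add: prime_imp_coprime coprime_commute)
  then have "ord ?P dvd 1"
    using ord_dvd by (simp add: coprime_iff_gcd_eq_1)
  then show ?thesis
    using pow_eq_id[of ?P 1] by simp
qed

theorem finprod_eq_one_of_recurrence:
  assumes "Factorial_Ring.prime p" and "p > 2"
    and recurrence: "\<And>i. x (i + k) \<otimes> x i = x (i + 1) \<otimes> x (i + 1)"
  shows "(\<Otimes>i\<in>{..<m}. x (int i)) = \<one>"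
proof -
  have linear: "weighted_prod (\<lambda>_. 2 - k) = \<one>"
  proof -
    have "weighted_prod (\<lambda>j. (j - k + j) - 2 * (j - 1)) = \<one>"
      by (rule weighted_prod_diff_eq_one, rule weighted_prod_recurrence[OF recurrence])
        (simp add: exponent_dvd_period)
    then show ?thesis by (simp add: algebra_simps)
  qed
  have quadratic: "weighted_prod (\<lambda>j. (4 - 2 * k) * j + (k * k + k - 4)) = \<one>"
  proof -
    have "int p dvd (j + int m) * (j + int m - 1) - j * (j - 1)" for j
    proof -
      have "(j + int m) * (j + int m - 1) - j * (j - 1) = int m * (2 * j + int m - 1)"
        by (simp add: algebra_simps)
      then show ?thesis using exponent_dvd_period by simp
    qed
    then have "weighted_prod (\<lambda>j. ((j - k) * (j - k - 1) + j * (j - 1))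
        - 2 * ((j - 1) * (j - 1 - 1))) = \<one>"
      by (intro weighted_prod_diff_eq_one weighted_prod_recurrence[OF recurrence])
    then show ?thesis by (simp add: algebra_simps)
  qed
  have "weighted_prod (\<lambda>_. 1) = \<one>"
  proof (cases "int p dvd 2 - k")
    case False
    with linear show ?thesis using weighted_prod_one_of_const assms(1) by blast
  next
    case True
    have "weighted_prod (\<lambda>_. 2) = weighted_prod (\<lambda>j. (4 - 2 * k) * j + (k * k + k - 4))"
    proof (rule weighted_prod_cong)
      fix j
      have "(2::int) - ((4 - 2 * k) * j + (k * k + k - 4)) = (2 - k) * (k + 3 - 2 * j)"
        by (simp add: algebra_simps)
      then show "int p dvd 2 - ((4 - 2 * k) * j + (k * k + k - 4))" using True by simp
    qed
    moreover have "\<not> int p dvd 2" using \<open>p > 2\<close> by (auto dest: zdvd_imp_le)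
    ultimately show ?thesis using quadratic weighted_prod_one_of_const assms(1) by metis
  qed
  then show ?thesis by (simp add: weighted_prod_def)
qed

end

context group
begin

lemma mult_inv_cancel_left [simp]: "x \<in> carrier G \<Longrightarrow> y \<in> carrier G \<Longrightarrow> x \<otimes> (inv x \<otimes> y) = y"
  by (simp add: m_assoc[symmetric])

lemma inv_mult_cancel_left [simp]: "x \<in> carrier G \<Longrightarrow> y \<in> carrier G \<Longrightarrow> inv x \<otimes> (x \<otimes> y) = y"
  by (simp add: m_assoc[symmetric])

lemma conj_by_mult:
  "\<lbrakk>g \<in> carrier G; u \<in> carrier G; v \<in> carrier G\<rbrakk>
    \<Longrightarrow> conj_by G g (u \<otimes> v) = conj_by G g u \<otimes> conj_by G g v"
  by (simp add: conj_by_def m_assoc)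

lemma conj_by_nat_pow:
  assumes "g \<in> carrier G" and "a \<in> carrier G"
  shows "conj_by G g a [^] (n::nat) = conj_by G g (a [^] n)"
  by (induction n) (simp_all add: assms conj_by_def m_assoc)

lemma conj_by_int_pow_add:
  assumes "t \<in> carrier G" and "a \<in> carrier G"
  shows "conj_by G (t [^] (i + j :: int)) a = conj_by G (t [^] i) (conj_by G (t [^] j) a)"
proof -
  have "t [^] (i + j) = t [^] j \<otimes> t [^] i"
    using int_pow_mult[OF assms(1), of j i] by (simp add: add.commute)
  then show ?thesis using assms by (simp add: conj_by_def inv_mult_group m_assoc)
qed

lemma funpow_conj_by:
  assumes "t \<in> carrier G" and "a \<in> carrier G"
  shows "(conj_by G t ^^ j) a = conj_by G (t [^] int j) a"
proof (induction j)
  case (Suc j)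
  then show ?case
    using conj_by_int_pow_add[OF assms, of 1 "int j"] assms by (simp add: add.commute)
qed (simp add: assms conj_by_def)

lemma inner_automorphism_iso:
  assumes "a \<in> carrier G"
  shows "(\<lambda>z. a \<otimes> z \<otimes> inv a) \<in> iso G G"
proof (rule isoI)
  show "(\<lambda>z. a \<otimes> z \<otimes> inv a) \<in> hom G G"
    by (rule homI) (simp_all add: assms m_assoc)
  show "bij_betw (\<lambda>z. a \<otimes> z \<otimes> inv a) (carrier G) (carrier G)"
    using conjugation_is_bij[OF assms] by (rule bij_betw_cong[THEN iffD1, rotated]) simp
qed

lemma twisted_inner_mult_commuting:
  assumes "a \<in> carrier G" "b \<in> carrier G" "g \<in> carrier G" and "a \<otimes> b = b \<otimes> a"
  shows "inv (b \<otimes> g) \<otimes> (a \<otimes> (b \<otimes> g) \<otimes> inv a) = conj_by G g a \<otimes> inv a"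
proof -
  have "inv (b \<otimes> g) \<otimes> (a \<otimes> (b \<otimes> g) \<otimes> inv a) = inv g \<otimes> (inv b \<otimes> (a \<otimes> b)) \<otimes> g \<otimes> inv a"
    using assms(1-3) by (simp add: inv_mult_group m_assoc)
  also have "inv b \<otimes> (a \<otimes> b) = a"
    by (metis assms(1,2,4) inv_mult_cancel_left)
  finally show ?thesis unfolding conj_by_def .
qed

end

locale abelian_by_cyclic = normal A G for A and G (structure) +
  fixes t
  assumes abelian: "\<And>x y. x \<in> A \<Longrightarrow> y \<in> A \<Longrightarrow> x \<otimes> y = y \<otimes> x"
    and generator_closed [simp]: "t \<in> carrier G"
    and quotient_generated: "carrier (G Mod A) = generate (G Mod A) {A #> t}"
begin

lemma comm_group_normal_subgroup: "comm_group (G\<lparr>carrier := A\<rparr>)"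
  by (rule group.group_comm_groupI[OF subgroup_imp_group[OF subgroup_axioms]]) (simp add: abelian)

lemma conj_by_mem: "g \<in> carrier G \<Longrightarrow> a \<in> A \<Longrightarrow> conj_by G g a \<in> A"
  unfolding conj_by_def by (rule inv_op_closed1)

lemma decompose_mult_generator_pow:
  assumes "z \<in> carrier G"
  shows "\<exists>b\<in>A. \<exists>k::int. z = b \<otimes> t [^] k"
proof -
  interpret Q: group "G Mod A" by (rule factorgroup_is_group)
  have hom: "(\<lambda>x. A #> x) \<in> hom G (G Mod A)" by (rule r_coset_hom_Mod)
  have t: "A #> t \<in> carrier (G Mod A)" and "A #> z \<in> carrier (G Mod A)"
    using hom assms by (auto simp: hom_def)
  then have "A #> z \<in> generate (G Mod A) {A #> t}"
    using quotient_generated by simp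
  then obtain k :: int where "A #> z = (A #> t) [^]\<^bsub>G Mod A\<^esub> k"
    unfolding Q.generate_pow[OF t] by blast
  then have "A #> z = A #> t [^] k"
    using hom_int_pow[OF hom generator_closed is_group Q.is_group] by simp
  then have "z \<in> A #> t [^] k"
    using rcos_self[OF assms subgroup_axioms] by simp
  then show ?thesis unfolding r_coset_def by blast
qed

lemma generator_pow_order_mem:
  assumes "finite (carrier (G Mod A))"
  shows "t [^] order (G Mod A) \<in> A"
proof -
  interpret Q: group "G Mod A" by (rule factorgroup_is_group)
  have hom: "(\<lambda>x. A #> x) \<in> hom G (G Mod A)" by (rule r_coset_hom_Mod)
  have "A #> t \<in> carrier (G Mod A)" using hom by (auto simp: hom_def)
  then have "(A #> t) [^]\<^bsub>G Mod A\<^esub> order (G Mod A) = \<one>\<^bsub>G Mod A\<^esub>"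
    using Q.pow_order_eq_1 assms by blast
  then have "A #> t [^] order (G Mod A) = A"
    using hom_nat_pow[OF hom generator_closed is_group Q.is_group] by simp
  then show ?thesis
    using rcos_self[OF _ subgroup_axioms, of "t [^] order (G Mod A)"] by simp
qed

lemma conj_by_generator_periodic:
  assumes "t [^] m \<in> A" and "a \<in> A"
  shows "conj_by G (t [^] (j + int m)) a = conj_by G (t [^] j) a"
proof -
  have "conj_by G (t [^] int m) a = a"
    using assms abelian[of a "t [^] m"] by (simp add: conj_by_def int_pow_int m_assoc)
  then show ?thesis
    using conj_by_int_pow_add[of t a j "int m"] assms by simp
qed

lemma conj_recurrence_of_twisted_subgroup:
  assumes a: "a \<in> A" and subgroup: "subgroup (twisted_class_e G (\<lambda>z. a \<otimes> z \<otimes> inv a)) G"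
  defines "x \<equiv> \<lambda>j::int. conj_by G (t [^] j) a"
  shows "\<exists>k. \<forall>i. x (i + k) \<otimes> x i = x (i + 1) \<otimes> x (i + 1)"
proof -
  have ac: "a \<in> carrier G" using a by simp
  have xA: "x j \<in> A" for j unfolding x_def using a by (simp add: conj_by_mem)
  then have xc: "x j \<in> carrier G" for j by simp
  have twisted: "inv (b \<otimes> t [^] k) \<otimes> (a \<otimes> (b \<otimes> t [^] k) \<otimes> inv a) = x k \<otimes> inv a"
    if "b \<in> A" for b k
    unfolding x_def using that a by (intro twisted_inner_mult_commuting) (simp_all add: abelian)
  define c where "c = x 1 \<otimes> inv a"
  have "c \<in> twisted_class_e G (\<lambda>z. a \<otimes> z \<otimes> inv a)"
    using twisted[of \<one> 1] unfolding twisted_class_e_def c_def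
    by (intro CollectI exI[of _ t]) (simp add: subgroup.one_closed[OF subgroup_axioms])
  then have "c \<otimes> c \<in> twisted_class_e G (\<lambda>z. a \<otimes> z \<otimes> inv a)"
    using subgroup by (simp add: subgroup.m_closed)
  then obtain z where "z \<in> carrier G" and "c \<otimes> c = inv z \<otimes> (a \<otimes> z \<otimes> inv a)"
    unfolding twisted_class_e_def by blast
  moreover obtain b k where "b \<in> A" and "z = b \<otimes> t [^] (k::int)"
    using decompose_mult_generator_pow[OF \<open>z \<in> carrier G\<close>] by blast
  ultimately have ck: "x k \<otimes> inv a = c \<otimes> c" using twisted by simp
  have comm: "inv a \<otimes> x 1 = x 1 \<otimes> inv a"
    using abelian[OF _ xA] a by (simp add: m_inv_closed)
  have base: "x k \<otimes> a = x 1 \<otimes> x 1"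
  proof -
    have "x k \<otimes> a = (x k \<otimes> inv a) \<otimes> a \<otimes> a"
      using xc ac by (simp add: m_assoc)
    also have "\<dots> = x 1 \<otimes> (inv a \<otimes> x 1) \<otimes> a"
      unfolding ck c_def using xc ac by (simp add: m_assoc)
    also have "\<dots> = x 1 \<otimes> x 1"
      unfolding comm using xc ac by (simp add: m_assoc)
    finally show ?thesis .
  qed
  have "x (i + k) \<otimes> x i = x (i + 1) \<otimes> x (i + 1)" for i
  proof -
    have shift: "x (i + j) = conj_by G (t [^] i) (x j)" for j
      unfolding x_def using ac by (simp add: conj_by_int_pow_add)
    have "x (i + k) \<otimes> x i = conj_by G (t [^] i) (x k \<otimes> a)"
      using shift[of k] shift[of 0] xc ac by (simp add: conj_by_mult x_def)
    also have "\<dots> = x (i + 1) \<otimes> x (i + 1)"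
      unfolding base using shift[of 1] xc by (simp add: conj_by_mult)
    finally show ?thesis .
  qed
  then show ?thesis by blast
qed

lemma periodic_exponent_seq_conj_by_generator:
  assumes "a \<in> A" and "a [^] p = \<one>" and "t [^] m \<in> A" and "p dvd m"
  shows "periodic_exponent_seq (G\<lparr>carrier := A\<rparr>) (\<lambda>j. conj_by G (t [^] j) a) p m"
proof (intro periodic_exponent_seq.intro periodic_exponent_seq_axioms.intro
    comm_group_normal_subgroup)
  show "conj_by G (t [^] j) a \<in> carrier (G\<lparr>carrier := A\<rparr>)" for j :: int
    using conj_by_mem[OF int_pow_closed[OF generator_closed] assms(1)] by simp
  show "conj_by G (t [^] j) a [^]\<^bsub>G\<lparr>carrier := A\<rparr>\<^esub> p = \<one>\<^bsub>G\<lparr>carrier := A\<rparr>\<^esub>" for j :: int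
  proof -
    have "conj_by G (t [^] j) a [^] p = \<one>"
      using conj_by_nat_pow[OF int_pow_closed[OF generator_closed], of a j p] assms(1,2)
      by (simp add: conj_by_def)
    then show ?thesis using nat_pow_consistent[of "conj_by G (t [^] j) a" p A] by simp
  qed
  show "conj_by G (t [^] (j + int m)) a = conj_by G (t [^] j) a" for j :: int
    by (rule conj_by_generator_periodic[OF assms(3,1)])
qed (rule assms(4))

theorem finprod_conj_by_generator_eq_one:
  assumes "Factorial_Ring.prime p" and "p > 2" and "a \<in> A" and "a [^] p = \<one>"
    and "t [^] m \<in> A" and "p dvd m"
    and "subgroup (twisted_class_e G (\<lambda>z. a \<otimes> z \<otimes> inv a)) G"
  shows "finprod (G\<lparr>carrier := A\<rparr>) (\<lambda>i. conj_by G (t [^] int i) a) {..<m} = \<one>"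
proof -
  interpret x: periodic_exponent_seq "G\<lparr>carrier := A\<rparr>" "\<lambda>j. conj_by G (t [^] j) a" p m
    by (rule periodic_exponent_seq_conj_by_generator[OF assms(3-6)])
  obtain k :: int where recurrence: "\<forall>i. conj_by G (t [^] (i + k)) a \<otimes> conj_by G (t [^] i) a
      = conj_by G (t [^] (i + 1)) a \<otimes> conj_by G (t [^] (i + 1)) a"
    using conj_recurrence_of_twisted_subgroup[OF assms(3,7)] by blast
  have "finprod (G\<lparr>carrier := A\<rparr>) (\<lambda>i. conj_by G (t [^] int i) a) {..<m}
      = \<one>\<^bsub>G\<lparr>carrier := A\<rparr>\<^esub>"
    by (rule x.finprod_eq_one_of_recurrence[OF assms(1,2), of k]) (use recurrence in simp)
  then show ?thesis by simp
qed

end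

theorem mainTheorem10:
  fixes G (structure) and A :: "'a set" and t :: 'a and p n :: nat
  assumes "Factorial_Ring.prime p" and "p > 2" and "n \<ge> 1"
    and "group G"
    and "A \<lhd> G"
    and "finite A"
    and "\<exists>m. card A = p ^ m"
    and "\<forall>x\<in>A. \<forall>y\<in>A. x \<otimes> y = y \<otimes> x"
    and "t \<in> carrier G"
    and "order (G Mod A) = p ^ n"
    and "carrier (G Mod A) = generate (G Mod A) {A #> t}"
    and "\<forall>\<phi>\<in>iso G G. subgroup (twisted_class_e G \<phi>) G"
  shows "\<forall>a\<in>A. a [^] p = \<one> \<longrightarrow>
           finprod (G\<lparr>carrier := A\<rparr>) (\<lambda>k. (conj_by G t ^^ k) a) {..<p ^ n} = \<one>"
proof (intro ballI impI)
  fix a assume a: "a \<in> A" and a_pow: "a [^] p = \<one>"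
  interpret abelian_by_cyclic A G t
    using assms(8,9,11)
    by (intro abelian_by_cyclic.intro[OF assms(5)] abelian_by_cyclic_axioms.intro) simp_all
  have "finite (carrier (G Mod A))"
    using assms(2,10) by (intro card_ge_0_finite) (simp add: order_def)
  then have "t [^] p ^ n \<in> A"
    using generator_pow_order_mem assms(10) by simp
  moreover have "p dvd p ^ n"
    using assms(3) by (intro dvd_power) simp
  moreover have "subgroup (twisted_class_e G (\<lambda>z. a \<otimes> z \<otimes> inv a)) G"
    using a by (intro bspec[OF assms(12)] inner_automorphism_iso) simp
  ultimately have "finprod (G\<lparr>carrier := A\<rparr>) (\<lambda>i. conj_by G (t [^] int i) a) {..<p ^ n} = \<one>"
    by (rule finprod_conj_by_generator_eq_one[OF assms(1,2) a a_pow])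
  moreover have "(\<lambda>k. (conj_by G t ^^ k) a) = (\<lambda>i. conj_by G (t [^] int i) a)"
    using a by (intro ext funpow_conj_by) simp_all
  ultimately show "finprod (G\<lparr>carrier := A\<rparr>) (\<lambda>k. (conj_by G t ^^ k) a) {..<p ^ n} = \<one>"
    by (simp only:)
qed

end
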